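(* Let $Y$ be a Young diagram with $n$ boxes and $Q$ a constant symmetric $n\times n$ matrix. Let $V_{Y;Q}(t)$ be the unique solution of $$\dot V=-\Gamma_1V-V\Gamma_1^T-Q-V\Gamma_2V,\qquad \lim_{t\to0^+}V^{-1}=0,$$ on its maximal interval of definition in $(0,+\infty)$. Then $V_{Y;Q}$ is monotone non-increasing, i.e. $\dot V_{Y;Q}(t)\le0$ (as a symmetric matrix) for all $t$ in that interval.
   Context: A Young diagram $Y$ has rows of lengths $n_1\ge\dots\ge n_k$, $\sum n_a=n$; boxes are labelled $ai$ with $a$ the row and $i=1,\dots,n_a$ the position in the row. $\Gamma_1=\Gamma_1(Y)$, $\Gamma_2=\Gamma_2(Y)$ are the $n\times n$ matrices indexed by boxes with $(\Gamma_1)_{ai,bj}=\delta_{ab}\delta_{i,j-1}$ and $(\Gamma_2)_{ai,bj}=\delta_{ab}\delta_{i1}\delta_{j1}$. The limit condition means $V(t)$ is invertible for small $t>0$ and $V(t)^{-1}\to0$ as $t\to0^+$; such a solution exists and is unique. *)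

theory Defs
  imports "HOL-Analysis.Analysis"
begin

text \<open>A Young diagram is given by the list ns = [n_1,...,n_k] of its row lengths,
  which are positive and non-increasing.  Boxes are pairs (a,i) with
  1 \<le> a \<le> k (row) and 1 \<le> i \<le> n_a (position in the row).
  n x n matrices indexed by boxes are represented as functions
  box \<Rightarrow> box \<Rightarrow> real, of which only the entries indexed by boxes matter.\<close>

type_synonym box = "nat \<times> nat"
type_synonym bmat = "box \<Rightarrow> box \<Rightarrow> real"

definition young_diagram :: "nat list \<Rightarrow> bool" where
  "young_diagram ns \<longleftrightarrow> (\<forall>a<length ns. 0 < ns ! a) \<and>
     (\<forall>a b. a \<le> b \<longrightarrow> b < length ns \<longrightarrow> ns ! b \<le> ns ! a)"

definition boxes :: "nat list \<Rightarrow> box set" where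
  "boxes ns = {(a, i). 1 \<le> a \<and> a \<le> length ns \<and> 1 \<le> i \<and> i \<le> ns ! (a - 1)}"

definition Gamma1 :: bmat where
  "Gamma1 = (\<lambda>(a, i) (b, j). if a = b \<and> i = j - 1 \<and> 1 \<le> j then 1 else 0)"

definition Gamma2 :: bmat where
  "Gamma2 = (\<lambda>(a, i) (b, j). if a = b \<and> i = 1 \<and> j = 1 then 1 else 0)"

definition mmul :: "box set \<Rightarrow> bmat \<Rightarrow> bmat \<Rightarrow> bmat" where
  "mmul B M N = (\<lambda>x z. \<Sum>y\<in>B. M x y * N y z)"

definition mtrans :: "bmat \<Rightarrow> bmat" where
  "mtrans M = (\<lambda>x y. M y x)"

definition is_inverse :: "box set \<Rightarrow> bmat \<Rightarrow> bmat \<Rightarrow> bool" where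
  "is_inverse B M W \<longleftrightarrow> (\<forall>x\<in>B. \<forall>z\<in>B.
     mmul B M W x z = (if x = z then 1 else 0) \<and> mmul B W M x z = (if x = z then 1 else 0))"

definition invertible_on :: "box set \<Rightarrow> bmat \<Rightarrow> bool" where
  "invertible_on B M \<longleftrightarrow> (\<exists>W. is_inverse B M W)"

definition minv :: "box set \<Rightarrow> bmat \<Rightarrow> bmat" where
  "minv B M = (SOME W. is_inverse B M W)"

definition symmetric_on :: "box set \<Rightarrow> bmat \<Rightarrow> bool" where
  "symmetric_on B M \<longleftrightarrow> (\<forall>x\<in>B. \<forall>y\<in>B. M x y = M y x)"

definition neg_semidef_on :: "box set \<Rightarrow> bmat \<Rightarrow> bool" where
  "neg_semidef_on B M \<longleftrightarrow> (\<forall>v :: box \<Rightarrow> real. (\<Sum>x\<in>B. \<Sum>y\<in>B. v x * M x y * v y) \<le> 0)"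

end

theory Submission
  imports Defs "HOL-Library.Function_Algebras"
begin

(* Near t = 0
   the inverse U = V^-1 exists, tends to 0 and solves the dual equation
   U' = Z := Gamma2 + U Gamma1 + Gamma1^T U + U Q U.  The antisymmetric part of U solves a linear
   Sylvester equation E' = C1 E + E C2 with E -> 0, hence vanishes; then Z solves the Lyapunov
   equation Z' = C Z + Z C^T with Z -> Gamma2 >= 0, hence stays positive semidefinite, and
   V' = - V Z V <= 0 near 0.  Differentiating the Riccati equation shows that V' itself solves a
   Lyapunov equation, so V' <= 0 propagates to the whole interval.  Both propagation facts rest on
   one comparison principle, applied to -|E|^2 and to the least eigenvalue respectively. *)

(* Boxes are pairs; splitting quantifiers over them only obstructs the matrix reasoning. *)
declare split_paired_All [simp del] split_paired_Ex [simp del]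

section \<open>A comparison principle\<close>

lemma continuous_on_extend_right_limit:
  fixes f :: "real \<Rightarrow> real"
  assumes "a < c" and lim: "(f \<longlongrightarrow> l) (at_right a)"
    and cont: "\<And>t. t \<in> {a<..c} \<Longrightarrow> isCont f t"
  shows "continuous_on {a..c} (\<lambda>s. if s = a then l else f s)"
  unfolding continuous_on_eq_continuous_within
proof
  fix t assume t: "t \<in> {a..c}"
  show "continuous (at t within {a..c}) (\<lambda>s. if s = a then l else f s)"
  proof (cases "t = a")
    case True
    have "((\<lambda>s. if s = a then l else f s) \<longlongrightarrow> l) (at_right a)"
      using lim by (rule Lim_transform_eventually) (simp add: eventually_at_filter)
    then show ?thesis
      using True at_within_Icc_at_right[OF \<open>a < c\<close>] by (simp add: continuous_within)
  next
    case False
    with t have "t \<in> {a<..c}" by auto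
    have "\<forall>\<^sub>F s in nhds t. s \<in> {a<..}"
      by (rule eventually_nhds_in_open) (use \<open>t \<in> {a<..c}\<close> in auto)
    then have "\<forall>\<^sub>F s in nhds t. f s = (if s = a then l else f s)"
      by (rule eventually_mono) auto
    then have "isCont (\<lambda>s. if s = a then l else f s) t"
      using cont[OF \<open>t \<in> {a<..c}\<close>] by (simp only: isCont_cong)
    then show ?thesis by (rule continuous_at_imp_continuous_within)
  qed
qed

lemma first_zero_crossing:
  fixes g :: "real \<Rightarrow> real"
  assumes cont: "continuous_on {a..c} g" and pos: "0 < g a" and c: "a \<le> c" "g c \<le> 0"
  obtains \<tau> where "a < \<tau>" "\<tau> \<le> c" "g \<tau> = 0" "\<And>s. a \<le> s \<Longrightarrow> s < \<tau> \<Longrightarrow> 0 < g s"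
proof -
  define S where "S = {s \<in> {a..c}. g s \<le> 0}"
  have "S = {a..c} \<inter> g -` {..0}" by (auto simp: S_def)
  then have "closed S" using continuous_closed_preimage[OF cont] by simp
  moreover have "S \<noteq> {}" "bdd_below S" using c by (auto simp: S_def bdd_below_def)
  ultimately have "Inf S \<in> S" by (rule closed_contains_Inf[rotated 2])
  define \<tau> where "\<tau> = Inf S"
  have \<tau>: "a \<le> \<tau>" "\<tau> \<le> c" "g \<tau> \<le> 0"
    using \<open>Inf S \<in> S\<close> by (auto simp: S_def \<tau>_def)
  have below: "0 < g s" if "a \<le> s" "s < \<tau>" for s
    using cInf_lower[OF _ \<open>bdd_below S\<close>, of s] that \<tau> by (force simp: S_def \<tau>_def)
  have "a < \<tau>" using \<tau> pos by (cases "\<tau> = a") auto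
  obtain z where z: "a \<le> z" "z \<le> \<tau>" "g z = 0"
    using IVT2'[of g \<tau> 0 a] continuous_on_subset[OF cont, of "{a..\<tau>}"] \<tau> pos by force
  then have "z = \<tau>" using below[of z] by force
  then show ?thesis using that \<open>a < \<tau>\<close> \<tau> z below by blast
qed

lemma nonneg_by_comparison:
  fixes m :: "real \<Rightarrow> real"
  assumes cont: "continuous_on {a..b} m" and start: "0 \<le> m a"
    and touch: "\<And>\<tau>. a < \<tau> \<Longrightarrow> \<tau> \<le> b \<Longrightarrow> m \<tau> < 0 \<Longrightarrow>
      \<exists>h D. h \<tau> = m \<tau> \<and> (\<forall>s. a \<le> s \<longrightarrow> s < \<tau> \<longrightarrow> m s \<le> h s) \<and>
        (h has_real_derivative D) (at \<tau>) \<and> L * m \<tau> \<le> D"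
    and t: "t \<in> {a..b}"
  shows "0 \<le> m t"
proof (rule ccontr)
  assume "\<not> 0 \<le> m t"
  \<comment> \<open>At the first zero of \<open>g\<close> the touching function, perturbed like \<open>g\<close>, strictly increases.\<close>
  define \<epsilon> where "\<epsilon> = - m t / (2 * exp ((L + 1) * (t - a)))"
  define g where "g s = m s + \<epsilon> * exp ((L + 1) * (s - a))" for s
  have \<epsilon>: "0 < \<epsilon>" using \<open>\<not> 0 \<le> m t\<close> by (simp add: \<epsilon>_def divide_neg_pos)
  have "continuous_on {a..t} g"
    unfolding g_def using t by (intro continuous_intros continuous_on_subset[OF cont]) auto
  moreover have "0 < g a" using start \<epsilon> by (simp add: g_def)
  moreover have "g t \<le> 0" using \<open>\<not> 0 \<le> m t\<close> by (simp add: g_def \<epsilon>_def)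
  ultimately obtain \<tau> where \<tau>: "a < \<tau>" "\<tau> \<le> t" "g \<tau> = 0"
    and gpos: "\<And>s. a \<le> s \<Longrightarrow> s < \<tau> \<Longrightarrow> 0 < g s"
    using first_zero_crossing t by (metis atLeastAtMost_iff)
  define e where "e = \<epsilon> * exp ((L + 1) * (\<tau> - a))"
  have e: "0 < e" "m \<tau> = - e" using \<epsilon> \<tau>(3) by (simp_all add: e_def g_def)
  obtain h D where h: "h \<tau> = m \<tau>" "\<And>s. a \<le> s \<Longrightarrow> s < \<tau> \<Longrightarrow> m s \<le> h s"
    and D: "(h has_real_derivative D) (at \<tau>)" "L * m \<tau> \<le> D"
    using touch[of \<tau>] \<tau> t e by auto
  define k where "k s = h s + \<epsilon> * exp ((L + 1) * (s - a))" for s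
  have "(k has_real_derivative D + e * (L + 1)) (at \<tau>)"
    unfolding k_def e_def using D(1) by (auto intro!: derivative_eq_intros)
  moreover have "0 < D + e * (L + 1)" using D(2) e by (simp add: algebra_simps)
  ultimately obtain d where d: "0 < d" "\<And>x. 0 < x \<Longrightarrow> x < d \<Longrightarrow> k (\<tau> - x) < k \<tau>"
    using DERIV_pos_inc_left by blast
  define x where "x = min d (\<tau> - a) / 2"
  have x: "0 < x" "x < d" "x < \<tau> - a" using d(1) \<tau>(1) by (auto simp: x_def)
  have "k \<tau> = 0" using h(1) \<tau>(3) by (simp add: k_def g_def)
  moreover have "g (\<tau> - x) \<le> k (\<tau> - x)" using h(2)[of "\<tau> - x"] x by (simp add: g_def k_def)
  ultimately show False using d(2)[OF x(1,2)] gpos[of "\<tau> - x"] x by simp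
qed

section \<open>Matrices indexed by a finite set\<close>

text \<open>Only the entries on \<open>B \<times> B\<close> of a matrix matter; the \<open>supported\<close> matrices, which vanish
  elsewhere, form an algebra with unit \<open>mid\<close>.\<close>

locale finite_index =
  fixes B :: "box set"
  assumes finite_B: "finite B"
begin

definition mrestrict :: "bmat \<Rightarrow> bmat" where
  "mrestrict M = (\<lambda>x y. if x \<in> B \<and> y \<in> B then M x y else 0)"

definition supported :: "bmat \<Rightarrow> bool" where
  "supported M \<longleftrightarrow> (\<forall>x y. x \<notin> B \<or> y \<notin> B \<longrightarrow> M x y = 0)"

definition mprod :: "bmat \<Rightarrow> bmat \<Rightarrow> bmat" where
  "mprod M N = (\<lambda>x z. if x \<in> B \<and> z \<in> B then \<Sum>y\<in>B. M x y * N y z else 0)"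

definition mid :: bmat where
  "mid = (\<lambda>x y. if x \<in> B \<and> x = y then 1 else 0)"

definition qform :: "(box \<Rightarrow> real) \<Rightarrow> bmat \<Rightarrow> real" where
  "qform v M = (\<Sum>x\<in>B. \<Sum>y\<in>B. v x * M x y * v y)"

definition mnorm :: "bmat \<Rightarrow> real" where
  "mnorm M = (\<Sum>x\<in>B. \<Sum>y\<in>B. \<bar>M x y\<bar>)"

lemma mprod_assoc: "mprod (mprod M N) P = mprod M (mprod N P)"
  unfolding mprod_def
  by (auto intro!: ext simp: sum_distrib_left sum_distrib_right mult.assoc intro: sum.swap)

lemma mprod_add_left: "mprod (M + N) P = mprod M P + mprod N P"
  and mprod_add_right: "mprod M (N + P) = mprod M N + mprod M P"
  and mprod_diff_left: "mprod (M - N) P = mprod M P - mprod N P"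
  and mprod_diff_right: "mprod M (N - P) = mprod M N - mprod M P"
  and mprod_minus_left: "mprod (- M) P = - mprod M P"
  and mprod_minus_right: "mprod M (- P) = - mprod M P"
  and mprod_zero_left: "mprod 0 P = 0"
  and mprod_zero_right: "mprod M 0 = 0"
  by (auto intro!: ext simp: mprod_def algebra_simps sum.distrib sum_subtractf sum_negf)

lemma mprod_mrestrict_left: "mprod (mrestrict M) N = mprod M N"
  and mprod_mrestrict_right: "mprod M (mrestrict N) = mprod M N"
  by (auto intro!: ext sum.cong simp: mprod_def mrestrict_def)

lemma supported_mprod: "supported (mprod M N)"
  and supported_mrestrict: "supported (mrestrict M)"
  and supported_mid: "supported mid"
  by (auto simp: supported_def mprod_def mrestrict_def mid_def)

lemma supported_add: "supported M \<Longrightarrow> supported N \<Longrightarrow> supported (M + N)"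
  and supported_diff: "supported M \<Longrightarrow> supported N \<Longrightarrow> supported (M - N)"
  and supported_uminus: "supported M \<Longrightarrow> supported (- M)"
  and supported_mtrans: "supported M \<Longrightarrow> supported (mtrans M)"
  by (auto simp: supported_def mtrans_def)

lemmas supported_intros = supported_mprod supported_mrestrict supported_mid
  supported_add supported_diff supported_uminus supported_mtrans

lemma supported_eqI:
  assumes "supported M" "supported N" "\<And>x y. x \<in> B \<Longrightarrow> y \<in> B \<Longrightarrow> M x y = N x y"
  shows "M = N"
  using assms unfolding supported_def by (intro ext) metis

lemma sum_mid_left: "x \<in> B \<Longrightarrow> (\<Sum>y\<in>B. mid x y * f y) = f x"
  and sum_mid_right: "z \<in> B \<Longrightarrow> (\<Sum>y\<in>B. f y * mid y z) = f z"
  by (simp_all add: mid_def finite_B if_distrib[of "\<lambda>a. a * _"] if_distrib[of "\<lambda>a. _ * a"]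
      cong: if_cong)

lemma mprod_mid_left: "mprod mid M = mrestrict M"
  and mprod_mid_right: "mprod M mid = mrestrict M"
  by (auto intro!: ext simp: mprod_def mrestrict_def sum_mid_left sum_mid_right)

lemma mrestrict_supported: "supported M \<Longrightarrow> mrestrict M = M"
  by (auto intro!: ext simp: supported_def mrestrict_def)

lemma mprod_cancel_left: "mprod M N = mid \<Longrightarrow> supported P \<Longrightarrow> mprod M (mprod N P) = P"
  by (simp add: mprod_mid_left mrestrict_supported flip: mprod_assoc)

lemma mtrans_mprod: "mtrans (mprod M N) = mprod (mtrans N) (mtrans M)"
  by (auto intro!: ext sum.cong simp: mprod_def mtrans_def mult.commute)

lemma mtrans_add: "mtrans (M + N) = mtrans M + mtrans N"
  and mtrans_diff: "mtrans (M - N) = mtrans M - mtrans N"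
  and mtrans_uminus: "mtrans (- M) = - mtrans M"
  and mtrans_mtrans: "mtrans (mtrans M) = M"
  and mtrans_zero: "mtrans 0 = 0"
  and mtrans_mid: "mtrans mid = mid"
  and mtrans_mrestrict: "mtrans (mrestrict M) = mrestrict (mtrans M)"
  by (auto intro!: ext simp: mtrans_def mid_def mrestrict_def)

lemmas mprod_simps = mprod_assoc mprod_add_left mprod_add_right mprod_diff_left mprod_diff_right
  mprod_minus_left mprod_minus_right mprod_zero_left mprod_zero_right
  mprod_mrestrict_left mprod_mrestrict_right
lemmas mtrans_simps = mtrans_mprod mtrans_add mtrans_diff mtrans_uminus mtrans_mtrans mtrans_zero
  mtrans_mid

lemma symmetric_on_if_mtrans_eq: "mtrans M = M \<Longrightarrow> symmetric_on B M"
  unfolding symmetric_on_def mtrans_def by metis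

lemma mtrans_mrestrict_eq: "symmetric_on B M \<Longrightarrow> mtrans (mrestrict M) = mrestrict M"
  unfolding symmetric_on_def mtrans_def mrestrict_def by (auto intro!: ext)

lemma mnorm_nonneg: "0 \<le> mnorm M"
  by (simp add: mnorm_def sum_nonneg)

lemma abs_entry_le_mnorm:
  assumes "x \<in> B" "y \<in> B"
  shows "\<bar>M x y\<bar> \<le> mnorm M"
proof -
  have "\<bar>M x y\<bar> \<le> (\<Sum>y\<in>B. \<bar>M x y\<bar>)"
    using assms finite_B by (intro member_le_sum) auto
  also have "\<dots> \<le> mnorm M"
    unfolding mnorm_def using assms finite_B by (intro member_le_sum) (auto intro: sum_nonneg)
  finally show ?thesis .
qed

lemma mnorm_add: "mnorm (M + N) \<le> mnorm M + mnorm N"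
  unfolding mnorm_def by (simp add: sum.distrib[symmetric] sum_mono abs_triangle_ineq)

lemma mnorm_mprod: "mnorm (mprod M N) \<le> mnorm M * mnorm N"
proof -
  have "mnorm (mprod M N) = (\<Sum>x\<in>B. \<Sum>z\<in>B. \<bar>\<Sum>y\<in>B. M x y * N y z\<bar>)"
    by (simp add: mnorm_def mprod_def)
  also have "\<dots> \<le> (\<Sum>x\<in>B. \<Sum>z\<in>B. \<Sum>y\<in>B. \<bar>M x y\<bar> * \<bar>N y z\<bar>)"
    by (intro sum_mono order_trans[OF sum_abs]) (simp add: abs_mult)
  also have "\<dots> = (\<Sum>x\<in>B. \<Sum>y\<in>B. \<bar>M x y\<bar> * (\<Sum>z\<in>B. \<bar>N y z\<bar>))"
    by (rule sum.cong[OF refl], subst sum.swap, simp add: sum_distrib_left)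
  also have "\<dots> \<le> (\<Sum>x\<in>B. \<Sum>y\<in>B. \<bar>M x y\<bar> * mnorm N)"
    unfolding mnorm_def using finite_B
    by (intro sum_mono mult_left_mono member_le_sum) (auto intro: sum_nonneg)
  also have "\<dots> = mnorm M * mnorm N"
    by (simp add: mnorm_def sum_distrib_right)
  finally show ?thesis .
qed

definition mtendsto :: "(real \<Rightarrow> bmat) \<Rightarrow> bmat \<Rightarrow> real filter \<Rightarrow> bool" where
  "mtendsto M L F \<longleftrightarrow> (\<forall>x y. ((\<lambda>s. M s x y) \<longlongrightarrow> L x y) F)"

definition has_mderiv :: "(real \<Rightarrow> bmat) \<Rightarrow> bmat \<Rightarrow> real \<Rightarrow> bool" where
  "has_mderiv M D t \<longleftrightarrow> (\<forall>x y. ((\<lambda>s. M s x y) has_real_derivative D x y) (at t))"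

lemma mtendsto_const: "mtendsto (\<lambda>s. P) P F"
  by (simp add: mtendsto_def)

lemma mtendsto_add: "mtendsto M L F \<Longrightarrow> mtendsto N L' F \<Longrightarrow> mtendsto (\<lambda>s. M s + N s) (L + L') F"
  and mtendsto_diff: "mtendsto M L F \<Longrightarrow> mtendsto N L' F \<Longrightarrow> mtendsto (\<lambda>s. M s - N s) (L - L') F"
  and mtendsto_uminus: "mtendsto M L F \<Longrightarrow> mtendsto (\<lambda>s. - M s) (- L) F"
  and mtendsto_mtrans: "mtendsto M L F \<Longrightarrow> mtendsto (\<lambda>s. mtrans (M s)) (mtrans L) F"
  unfolding mtendsto_def mtrans_def by (auto intro: tendsto_intros)

lemma mtendsto_mprod:
  assumes "mtendsto M L F" "mtendsto N L' F"
  shows "mtendsto (\<lambda>s. mprod (M s) (N s)) (mprod L L') F"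
proof -
  have "((\<lambda>s. M s x y) \<longlongrightarrow> L x y) F" "((\<lambda>s. N s x y) \<longlongrightarrow> L' x y) F" for x y
    using assms unfolding mtendsto_def by blast+
  then have "((\<lambda>s. mprod (M s) (N s) x z) \<longlongrightarrow> mprod L L' x z) F" for x z
    unfolding mprod_def by (cases "x \<in> B"; cases "z \<in> B") (simp_all add: tendsto_sum tendsto_mult)
  then show ?thesis
    unfolding mtendsto_def by blast
qed

lemmas mtendsto_intros = mtendsto_const mtendsto_add mtendsto_diff mtendsto_uminus
  mtendsto_mtrans mtendsto_mprod

lemma mtendsto_at_right: "mtendsto M L (at t) \<Longrightarrow> mtendsto M L (at_right t)"
  unfolding mtendsto_def using tendsto_mono[OF at_le] by blast

lemma has_mderiv_const: "has_mderiv (\<lambda>s. P) 0 t"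
  by (simp add: has_mderiv_def)

lemma has_mderiv_add: "has_mderiv M D t \<Longrightarrow> has_mderiv N E t \<Longrightarrow>
    has_mderiv (\<lambda>s. M s + N s) (D + E) t"
  and has_mderiv_diff: "has_mderiv M D t \<Longrightarrow> has_mderiv N E t \<Longrightarrow>
    has_mderiv (\<lambda>s. M s - N s) (D - E) t"
  and has_mderiv_uminus: "has_mderiv M D t \<Longrightarrow> has_mderiv (\<lambda>s. - M s) (- D) t"
  and has_mderiv_mtrans: "has_mderiv M D t \<Longrightarrow> has_mderiv (\<lambda>s. mtrans (M s)) (mtrans D) t"
  unfolding has_mderiv_def mtrans_def by (auto intro: DERIV_add DERIV_diff DERIV_minus)

lemma has_mderiv_mprod:
  assumes M: "has_mderiv M D t" and N: "has_mderiv N E t"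
  shows "has_mderiv (\<lambda>s. mprod (M s) (N s)) (mprod D (N t) + mprod (M t) E) t"
  unfolding has_mderiv_def
proof (intro allI)
  fix x z
  have dM: "((\<lambda>s. M s x y) has_real_derivative D x y) (at t)"
    and dN: "((\<lambda>s. N s y z) has_real_derivative E y z) (at t)" for y
    using M N unfolding has_mderiv_def by blast+
  show "((\<lambda>s. mprod (M s) (N s) x z) has_real_derivative
      (mprod D (N t) + mprod (M t) E) x z) (at t)"
  proof (cases "x \<in> B \<and> z \<in> B")
    case True
    have "((\<lambda>s. \<Sum>y\<in>B. M s x y * N s y z) has_real_derivative
        (\<Sum>y\<in>B. D x y * N t y z + M t x y * E y z)) (at t)"
      by (intro DERIV_sum, rule DERIV_cong[OF DERIV_mult[OF dM dN]]) (simp add: algebra_simps)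
    moreover have "(\<lambda>s. mprod (M s) (N s) x z) = (\<lambda>s. \<Sum>y\<in>B. M s x y * N s y z)"
      "(mprod D (N t) + mprod (M t) E) x z = (\<Sum>y\<in>B. D x y * N t y z + M t x y * E y z)"
      using True by (simp_all add: mprod_def sum.distrib)
    ultimately show ?thesis by simp
  next
    case False
    then have "(\<lambda>s. mprod (M s) (N s) x z) = (\<lambda>s. 0)" "(mprod D (N t) + mprod (M t) E) x z = 0"
      by (auto simp: mprod_def)
    then show ?thesis by simp
  qed
qed

lemmas has_mderiv_intros = has_mderiv_const has_mderiv_add has_mderiv_diff has_mderiv_uminus
  has_mderiv_mtrans has_mderiv_mprod

lemma has_mderiv_transform_open:
  "has_mderiv M D t \<Longrightarrow> open S \<Longrightarrow> t \<in> S \<Longrightarrow> (\<And>s. s \<in> S \<Longrightarrow> M s = N s) \<Longrightarrow>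
    has_mderiv N D t"
  unfolding has_mderiv_def by (metis (no_types, lifting) has_field_derivative_transform_within_open)

lemma has_mderiv_imp_mtendsto:
  assumes "has_mderiv M D t"
  shows "mtendsto M (M t) (at t)"
  unfolding mtendsto_def
proof (intro allI)
  fix x y
  have "isCont (\<lambda>s. M s x y) t"
    using assms unfolding has_mderiv_def by (blast intro: DERIV_isCont)
  then show "((\<lambda>s. M s x y) \<longlongrightarrow> M t x y) (at t)"
    by (simp add: isCont_def)
qed

lemma inverse_diff_eq:
  assumes "mprod U V = mid" "mprod V' U' = mid" "supported U" "supported U'"
  shows "U - U' = mprod (mprod U (V' - V)) U'"
proof -
  have "mprod (mprod U (V' - V)) U' = mprod U (mprod V' U') - mprod (mprod U V) U'"
    by (simp add: mprod_diff_left mprod_diff_right mprod_assoc)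
  also have "\<dots> = U - U'"
    using assms by (simp add: mprod_mid_left mprod_mid_right mrestrict_supported)
  finally show ?thesis by simp
qed

lemma mnorm_inverse_diff_le:
  assumes "mprod U V = mid" "mprod V' U' = mid" "supported U" "supported U'"
    and small: "mnorm (V' - V) * mnorm U' \<le> 1/2"
  shows "mnorm (U - U') \<le> 2 * mnorm U' * mnorm U' * mnorm (V' - V)"
proof -
  define c where "c = mnorm U'"
  have c: "0 \<le> c" by (simp add: c_def mnorm_nonneg)
  have "mnorm (U - U') \<le> mnorm (mprod U (V' - V)) * c"
    unfolding inverse_diff_eq[OF assms(1-4)] c_def by (rule mnorm_mprod)
  also have "\<dots> \<le> mnorm U * mnorm (V' - V) * c"
    by (rule mult_right_mono[OF mnorm_mprod c])
  finally have diff: "mnorm (U - U') \<le> mnorm U * mnorm (V' - V) * c" .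
  have "mnorm U \<le> c + mnorm (U - U')"
    using mnorm_add[of U' "U - U'"] by (simp add: c_def)
  also have "\<dots> \<le> c + mnorm U * (mnorm (V' - V) * c)"
    using diff by (simp add: mult.assoc)
  also have "\<dots> \<le> c + mnorm U * (1/2)"
    using small mnorm_nonneg[of U] by (intro add_left_mono mult_left_mono) (auto simp: c_def)
  finally have "mnorm U \<le> 2 * c" by simp
  have "mnorm (U - U') \<le> mnorm U * mnorm (V' - V) * c" by (fact diff)
  also have "\<dots> \<le> 2 * c * mnorm (V' - V) * c"
    using \<open>mnorm U \<le> 2 * c\<close> mnorm_nonneg[of "V' - V"] c by (intro mult_right_mono) auto
  finally show ?thesis by (simp add: c_def mult_ac)
qed

lemma mtendsto_inverse:
  assumes S: "open S" "t \<in> S"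
    and inverse: "\<And>s. s \<in> S \<Longrightarrow> mprod (U s) (V s) = mid \<and> mprod (V s) (U s) = mid"
    and supp: "\<And>s. supported (U s)"
    and cont: "mtendsto V (V t) (at t)"
  shows "mtendsto U (U t) (at t)"
proof -
  define c where "c = mnorm (U t)"
  have "((\<lambda>s. V s x y) \<longlongrightarrow> V t x y) (at t)" for x y
    using cont unfolding mtendsto_def by blast
  then have "((\<lambda>s. \<Sum>x\<in>B. \<Sum>y\<in>B. \<bar>V t x y - V s x y\<bar>) \<longlongrightarrow>
      (\<Sum>x\<in>B. \<Sum>y\<in>B. \<bar>V t x y - V t x y\<bar>)) (at t)"
    by (intro tendsto_intros)
  then have dV: "((\<lambda>s. mnorm (V t - V s)) \<longlongrightarrow> 0) (at t)"
    by (simp add: mnorm_def)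
  have "\<forall>\<^sub>F s in at t. mnorm (V t - V s) * c < 1/2"
    using tendsto_mult_left_zero[OF dV, of c] by (rule order_tendstoD) simp
  then have bound: "\<forall>\<^sub>F s in at t. mnorm (U s - U t) \<le> 2 * c * c * mnorm (V t - V s)"
    using eventually_at_in_open'[OF S]
    by eventually_elim
      (use inverse[OF S(2)] inverse supp in \<open>auto simp: c_def intro!: mnorm_inverse_diff_le\<close>)
  have "((\<lambda>s. U s x y - U t x y) \<longlongrightarrow> 0) (at t)" for x y
  proof (cases "x \<in> B \<and> y \<in> B")
    case True
    have "\<forall>\<^sub>F s in at t. norm (U s x y - U t x y) \<le> 2 * c * c * mnorm (V t - V s)"
      using bound abs_entry_le_mnorm[of x y "U _ - U t"] True
      by (auto elim!: eventually_mono intro: order_trans)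
    then show ?thesis
      using tendsto_mult_right_zero[OF dV] by (rule Lim_null_comparison)
  next
    case False
    then have "U s x y = 0" for s
      using supp unfolding supported_def by blast
    then show ?thesis by simp
  qed
  then show ?thesis
    unfolding mtendsto_def by (simp add: LIM_zero_iff)
qed

lemma has_mderiv_inverse:
  assumes S: "open S" "t \<in> S"
    and inverse: "\<And>s. s \<in> S \<Longrightarrow> mprod (U s) (V s) = mid \<and> mprod (V s) (U s) = mid"
    and supp: "\<And>s. supported (U s)"
    and dV: "has_mderiv V W t"
  shows "has_mderiv U (- mprod (mprod (U t) W) (U t)) t"
  unfolding has_mderiv_def
proof (intro allI)
  fix x y
  show "((\<lambda>s. U s x y) has_real_derivative (- mprod (mprod (U t) W) (U t)) x y) (at t)"
  proof (cases "x \<in> B \<and> y \<in> B")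
    case False
    then have "U s x y = 0" for s
      using supp unfolding supported_def by blast
    moreover have "(- mprod (mprod (U t) W) (U t)) x y = 0"
      using False by (auto simp: mprod_def)
    ultimately show ?thesis by simp
  next
    case True
    have U: "((\<lambda>s. U s x p) \<longlongrightarrow> U t x p) (at t)" for p
      using mtendsto_inverse[OF S inverse supp has_mderiv_imp_mtendsto[OF dV]]
      unfolding mtendsto_def by blast
    have V: "((\<lambda>s. (V t p q - V s p q) / (s - t)) \<longlongrightarrow> - W p q) (at t)" for p q
    proof -
      have "((\<lambda>s. (V s p q - V t p q) / (s - t)) \<longlongrightarrow> W p q) (at t)"
        using dV unfolding has_mderiv_def has_field_derivative_iff by blast
      from tendsto_minus[OF this] show ?thesis by (simp add: minus_divide_left)
    qed
    \<comment> \<open>The difference quotient of \<open>U\<close> is \<open>U s\<close> times that of \<open>- V\<close> times \<open>U t\<close>.\<close>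
    define G where
      "G s = (\<Sum>q\<in>B. (\<Sum>p\<in>B. U s x p * ((V t p q - V s p q) / (s - t))) * U t q y)" for s
    have "(G \<longlongrightarrow> (\<Sum>q\<in>B. (\<Sum>p\<in>B. U t x p * - W p q) * U t q y)) (at t)"
      unfolding G_def by (intro tendsto_intros U V)
    moreover have "\<forall>\<^sub>F s in at t. G s = (U s x y - U t x y) / (s - t)"
      using eventually_at_in_open[OF S]
    proof eventually_elim
      case (elim s)
      have "U s - U t = mprod (mprod (U s) (V t - V s)) (U t)"
        using inverse[of s] inverse[OF S(2)] elim supp by (intro inverse_diff_eq) auto
      from fun_cong[OF fun_cong[OF this, of x], of y] True
      have "U s x y - U t x y = (\<Sum>q\<in>B. (\<Sum>p\<in>B. U s x p * (V t p q - V s p q)) * U t q y)"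
        by (simp add: mprod_def)
      then show ?case
        using elim by (simp add: G_def sum_divide_distrib sum_distrib_right)
    qed
    ultimately have "((\<lambda>s. (U s x y - U t x y) / (s - t)) \<longlongrightarrow>
        (\<Sum>q\<in>B. (\<Sum>p\<in>B. U t x p * - W p q) * U t q y)) (at t)"
      by (rule Lim_transform_eventually)
    moreover have "(\<Sum>q\<in>B. (\<Sum>p\<in>B. U t x p * - W p q) * U t q y) =
        (- mprod (mprod (U t) W) (U t)) x y"
      using True by (simp add: mprod_def sum_negf)
    ultimately show ?thesis
      unfolding has_field_derivative_iff by simp
  qed
qed

section \<open>Quadratic forms and the least eigenvalue\<close>

lemma qform_add: "qform v (M + N) = qform v M + qform v N"
  and qform_diff: "qform v (M - N) = qform v M - qform v N"
  and qform_uminus: "qform v (- M) = - qform v M"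
  and qform_scale: "qform (\<lambda>x. c * v x) M = c\<^sup>2 * qform v M"
  unfolding qform_def
  by (simp_all add: algebra_simps sum.distrib sum_subtractf sum_negf sum_distrib_left
      power2_eq_square)

lemma qform_mid_scaled: "qform v (\<lambda>x y. c * mid x y) = c * (\<Sum>x\<in>B. (v x)\<^sup>2)"
proof -
  have "qform v (\<lambda>x y. c * mid x y) = (\<Sum>x\<in>B. v x * (\<Sum>y\<in>B. mid x y * (c * v y)))"
    unfolding qform_def by (simp add: sum_distrib_left algebra_simps)
  also have "\<dots> = (\<Sum>x\<in>B. v x * (c * v x))"
    by (intro sum.cong refl) (simp add: sum_mid_left)
  also have "\<dots> = c * (\<Sum>x\<in>B. (v x)\<^sup>2)"
    by (simp add: sum_distrib_left power2_eq_square algebra_simps)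
  finally show ?thesis .
qed

lemma qform_mtrans: "qform v (mtrans M) = qform v M"
  unfolding qform_def mtrans_def by (subst sum.swap) (simp add: algebra_simps)

definition unit_vectors :: "(box \<Rightarrow> real) set" where
  "unit_vectors = {v. (\<forall>x. x \<notin> B \<longrightarrow> v x = 0) \<and> (\<Sum>x\<in>B. (v x)\<^sup>2) = 1}"

lemma abs_le_1_if_unit_vector:
  assumes "v \<in> unit_vectors" "x \<in> B"
  shows "\<bar>v x\<bar> \<le> 1"
proof -
  have "(v x)\<^sup>2 \<le> (\<Sum>x\<in>B. (v x)\<^sup>2)"
    using assms(2) finite_B by (intro member_le_sum) auto
  then show ?thesis
    using assms(1) abs_le_square_iff[of "v x" 1] by (simp add: unit_vectors_def)
qed

lemma compact_unit_vectors: "compact unit_vectors"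
proof -
  have "compactin (product_topology (\<lambda>_. euclidean) UNIV)
      (PiE UNIV (\<lambda>x. if x \<in> B then {-1..1::real} else {0}))"
    by (subst compactin_PiE) (auto simp: compactin_euclidean_iff)
  then have "compact (PiE UNIV (\<lambda>x. if x \<in> B then {-1..1::real} else {0}))"
    by (simp add: euclidean_product_topology compactin_euclidean_iff)
  moreover have "closed {v :: box \<Rightarrow> real. (\<Sum>x\<in>B. (v x)\<^sup>2) = 1}"
    by (intro closed_Collect_eq continuous_intros)
      (auto intro: continuous_on_subset[OF continuous_on_product_coordinates])
  moreover have "unit_vectors = PiE UNIV (\<lambda>x. if x \<in> B then {-1..1} else {0}) \<inter>
      {v. (\<Sum>x\<in>B. (v x)\<^sup>2) = 1}" (is "_ = ?P \<inter> ?S")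
  proof (intro equalityI subsetI)
    fix v assume v: "v \<in> unit_vectors"
    have "v x = 0" if "x \<notin> B" for x
      using v that unfolding unit_vectors_def by blast
    then have "v x \<in> (if x \<in> B then {-1..1} else {0})" for x
      using abs_le_1_if_unit_vector[OF v, of x] by (auto simp: abs_le_iff)
    then show "v \<in> ?P \<inter> ?S" using v by (simp add: unit_vectors_def PiE_iff)
  next
    fix v assume v: "v \<in> ?P \<inter> ?S"
    have "v x = 0" if "x \<notin> B" for x
    proof -
      have "v x \<in> (if x \<in> B then {-1..1} else {0})" using v by (simp add: PiE_iff)
      then show ?thesis using that by simp
    qed
    then show "v \<in> unit_vectors" using v by (simp add: unit_vectors_def)
  qed
  ultimately show ?thesis by (simp add: compact_Int_closed)
qed

lemma unit_vectors_nonempty: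
  assumes "b \<in> B"
  shows "unit_vectors \<noteq> {}"
proof -
  have "(\<Sum>x\<in>B. (if x = b then 1 else 0 :: real)\<^sup>2) = 1"
    using assms finite_B by (simp add: if_distrib[of "\<lambda>r. r\<^sup>2"] cong: if_cong)
  then have "(\<lambda>x. if x = b then 1 else 0) \<in> unit_vectors"
    using assms by (auto simp: unit_vectors_def)
  then show ?thesis by blast
qed

lemma abs_qform_le_mnorm:
  assumes "v \<in> unit_vectors"
  shows "\<bar>qform v M\<bar> \<le> mnorm M"
proof -
  have "\<bar>qform v M\<bar> \<le> (\<Sum>x\<in>B. \<Sum>y\<in>B. \<bar>v x\<bar> * \<bar>M x y\<bar> * \<bar>v y\<bar>)"
    unfolding qform_def by (intro order_trans[OF sum_abs] sum_mono order_trans[OF sum_abs])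
      (simp add: abs_mult)
  also have "\<dots> \<le> mnorm M"
    unfolding mnorm_def
  proof (intro sum_mono)
    fix x y assume "x \<in> B" "y \<in> B"
    then have "\<bar>v x\<bar> * \<bar>M x y\<bar> * \<bar>v y\<bar> \<le> 1 * \<bar>M x y\<bar> * 1"
      using abs_le_1_if_unit_vector[OF assms] by (intro mult_mono) auto
    then show "\<bar>v x\<bar> * \<bar>M x y\<bar> * \<bar>v y\<bar> \<le> \<bar>M x y\<bar>" by simp
  qed
  finally show ?thesis .
qed

lemma qform_ge_if_unit_vectors_ge:
  assumes ge: "\<And>w. w \<in> unit_vectors \<Longrightarrow> c \<le> qform w M"
  shows "c * (\<Sum>x\<in>B. (v x)\<^sup>2) \<le> qform v M"
proof (cases "(\<Sum>x\<in>B. (v x)\<^sup>2) = 0")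
  case True
  then have "\<forall>x\<in>B. v x = 0" using finite_B by (simp add: sum_nonneg_eq_0_iff)
  then have "qform v M = 0" by (simp add: qform_def)
  then show ?thesis using True by simp
next
  case False
  define S where "S = (\<Sum>x\<in>B. (v x)\<^sup>2)"
  define r where "r = sqrt S"
  have "0 < S" using False sum_nonneg[of B "\<lambda>x. (v x)\<^sup>2"] by (simp add: S_def)
  then have r: "0 < r" "r\<^sup>2 = S" by (simp_all add: r_def)
  define w where "w x = (if x \<in> B then v x / r else 0)" for x
  have "(\<Sum>x\<in>B. (w x)\<^sup>2) = S / r\<^sup>2"
    by (simp add: S_def w_def power_divide sum_divide_distrib)
  then have "w \<in> unit_vectors" using r \<open>0 < S\<close> by (simp add: unit_vectors_def w_def)
  have "qform v M = qform (\<lambda>x. r * w x) M"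
    unfolding qform_def using r by (intro sum.cong refl) (simp add: w_def)
  also have "\<dots> = S * qform w M" by (simp add: qform_scale r)
  finally show ?thesis
    using ge[OF \<open>w \<in> unit_vectors\<close>] \<open>0 < S\<close> by (simp add: S_def)
qed

lemma psd_null_vector_in_kernel:
  assumes sym: "symmetric_on B M" and psd: "\<And>w. 0 \<le> qform w M" and null: "qform v M = 0"
    and x: "x \<in> B"
  shows "(\<Sum>y\<in>B. M x y * v y) = 0"
proof -
  define u where "u x = (\<Sum>y\<in>B. M x y * v y)" for x
  define s where "s = (\<Sum>x\<in>B. u x * u x)"
  define q where "q = qform u M"
  have q: "0 \<le> q" using psd by (simp add: q_def)
  have swap: "(\<Sum>x\<in>B. \<Sum>y\<in>B. v x * M x y * u y) = s"
    unfolding s_def u_def using sym unfolding symmetric_on_def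
    by (subst sum.swap)
      (auto intro!: sum.cong simp: sum_distrib_left sum_distrib_right algebra_simps)
  have expand: "qform (\<lambda>x. v x + r * u x) M = 2 * r * s + r\<^sup>2 * q" for r
  proof -
    have "qform (\<lambda>x. v x + r * u x) M = qform v M + r * (\<Sum>x\<in>B. \<Sum>y\<in>B. u x * M x y * v y)
        + r * (\<Sum>x\<in>B. \<Sum>y\<in>B. v x * M x y * u y) + r\<^sup>2 * q"
      unfolding qform_def q_def
      by (simp add: algebra_simps sum.distrib sum_distrib_left power2_eq_square)
    also have "(\<Sum>x\<in>B. \<Sum>y\<in>B. u x * M x y * v y) = s"
      by (simp add: s_def u_def sum_distrib_left algebra_simps)
    finally show ?thesis using swap null by simp
  qed
  have "s = 0"
  proof (rule ccontr)
    assume "s \<noteq> 0"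
    then have "0 < s" by (simp add: s_def u_def order_le_neq_trans sum_nonneg)
    define r where "r = - s / (q + 1)"
    have r: "r * (q + 1) = - s" using q by (simp add: r_def)
    have "(2 * r * s + r\<^sup>2 * q) * (q + 1)\<^sup>2 = 2 * s * (r * (q + 1)) * (q + 1) + (r * (q + 1))\<^sup>2 * q"
      by (simp add: power2_eq_square algebra_simps)
    also have "\<dots> = - (s\<^sup>2 * (q + 2))"
      unfolding r by (simp add: power2_eq_square algebra_simps)
    also have "\<dots> < 0" using \<open>0 < s\<close> q by simp
    finally have "qform (\<lambda>x. v x + r * u x) M < 0"
      unfolding expand using q by (simp add: mult_less_0_iff)
    then show False using psd not_le by blast
  qed
  then have "u x * u x = 0"
    using finite_B x by (simp add: s_def sum_nonneg_eq_0_iff)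
  then show ?thesis by (simp add: u_def)
qed

lemma min_qform_vector_is_eigenvector:
  assumes sym: "symmetric_on B M" and v: "v \<in> unit_vectors"
    and min: "\<And>w. w \<in> unit_vectors \<Longrightarrow> qform v M \<le> qform w M"
    and x: "x \<in> B"
  shows "(\<Sum>y\<in>B. M x y * v y) = qform v M * v x"
proof -
  define \<mu> where "\<mu> = qform v M"
  define P where "P = M - (\<lambda>x y. \<mu> * mid x y)"
  have "symmetric_on B P" using sym by (auto simp: symmetric_on_def P_def mid_def)
  moreover have "0 \<le> qform w P" for w
    using qform_ge_if_unit_vectors_ge[of \<mu> M w] min
    by (simp add: P_def qform_diff qform_mid_scaled \<mu>_def)
  moreover have "qform v P = 0"
    using v by (simp add: P_def qform_diff qform_mid_scaled \<mu>_def unit_vectors_def)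
  ultimately have "(\<Sum>y\<in>B. P x y * v y) = 0"
    using x by (rule psd_null_vector_in_kernel)
  then show ?thesis
    using sum_mid_left[OF x, of "\<lambda>y. \<mu> * v y"]
    by (simp add: P_def \<mu>_def algebra_simps sum_subtractf sum_distrib_left)
qed

lemma qform_mprod_eigenvector:
  assumes eig: "\<And>x. x \<in> B \<Longrightarrow> (\<Sum>y\<in>B. M x y * v y) = c * v x"
  shows "qform v (mprod C M) = c * qform v C"
proof -
  have "(\<Sum>z\<in>B. mprod C M x z * v z) = c * (\<Sum>y\<in>B. C x y * v y)" if "x \<in> B" for x
  proof -
    have "(\<Sum>z\<in>B. mprod C M x z * v z) = (\<Sum>z\<in>B. \<Sum>y\<in>B. C x y * M y z * v z)"
      using that by (simp add: mprod_def sum_distrib_right)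
    also have "\<dots> = (\<Sum>y\<in>B. C x y * (\<Sum>z\<in>B. M y z * v z))"
      by (subst sum.swap) (simp add: sum_distrib_left mult.assoc)
    also have "\<dots> = (\<Sum>y\<in>B. C x y * (c * v y))"
      by (intro sum.cong refl) (simp add: eig)
    also have "\<dots> = c * (\<Sum>y\<in>B. C x y * v y)"
      by (simp add: sum_distrib_left algebra_simps)
    finally show ?thesis .
  qed
  then have "(\<Sum>x\<in>B. v x * (\<Sum>z\<in>B. mprod C M x z * v z)) =
      (\<Sum>x\<in>B. v x * (c * (\<Sum>y\<in>B. C x y * v y)))"
    by (intro sum.cong refl) simp
  then show ?thesis
    unfolding qform_def by (simp add: sum_distrib_left mult.assoc mult.left_commute)
qed

lemma qform_congruence:
  "qform v (mprod (mprod (mtrans P) M) P) = qform (\<lambda>y. \<Sum>x\<in>B. P y x * v x) M"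
proof -
  have "qform v (mprod (mprod (mtrans P) M) P) =
      (\<Sum>x\<in>B. \<Sum>z\<in>B. \<Sum>y\<in>B. \<Sum>w\<in>B. v x * P w x * M w y * P y z * v z)"
    unfolding qform_def mprod_def mtrans_def
    by (simp add: sum_distrib_left sum_distrib_right mult.assoc)
  also have "\<dots> = (\<Sum>x\<in>B. \<Sum>y\<in>B. \<Sum>z\<in>B. \<Sum>w\<in>B. v x * P w x * M w y * P y z * v z)"
    by (rule sum.cong[OF refl], rule sum.swap)
  also have "\<dots> = (\<Sum>x\<in>B. \<Sum>y\<in>B. \<Sum>w\<in>B. \<Sum>z\<in>B. v x * P w x * M w y * P y z * v z)"
    by (rule sum.cong[OF refl], rule sum.cong[OF refl], rule sum.swap)
  also have "\<dots> = (\<Sum>y\<in>B. \<Sum>w\<in>B. \<Sum>x\<in>B. \<Sum>z\<in>B. v x * P w x * M w y * P y z * v z)"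
    by (subst sum.swap, rule sum.cong[OF refl], rule sum.swap)
  also have "\<dots> = (\<Sum>w\<in>B. \<Sum>y\<in>B. \<Sum>x\<in>B. \<Sum>z\<in>B. v x * P w x * M w y * P y z * v z)"
    by (rule sum.swap)
  also have "\<dots> = qform (\<lambda>y. \<Sum>x\<in>B. P y x * v x) M"
    unfolding qform_def by (simp add: sum_distrib_left sum_distrib_right mult_ac)
  finally show ?thesis .
qed

definition min_qform :: "bmat \<Rightarrow> real" where
  "min_qform M = (INF v\<in>unit_vectors. qform v M)"

lemma min_qform_le:
  assumes "v \<in> unit_vectors"
  shows "min_qform M \<le> qform v M"
proof -
  have "- mnorm M \<le> qform w M" if "w \<in> unit_vectors" for w
    using abs_qform_le_mnorm[OF that, of M] by linarith
  then have "bdd_below ((\<lambda>v. qform v M) ` unit_vectors)"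
    by (intro bdd_belowI2)
  then show ?thesis using assms unfolding min_qform_def by (rule cINF_lower)
qed

lemma min_qform_attained:
  assumes "B \<noteq> {}"
  obtains v where "v \<in> unit_vectors" "qform v M = min_qform M"
proof -
  have "continuous_on unit_vectors (\<lambda>v. qform v M)"
    unfolding qform_def
    by (intro continuous_intros)
      (auto intro: continuous_on_subset[OF continuous_on_product_coordinates])
  then obtain v where v: "v \<in> unit_vectors" "\<And>w. w \<in> unit_vectors \<Longrightarrow> qform v M \<le> qform w M"
    using continuous_attains_inf[OF compact_unit_vectors] unit_vectors_nonempty assms by blast
  then have "qform v M \<le> min_qform M"
    unfolding min_qform_def by (intro cINF_greatest) auto
  then show ?thesis using min_qform_le[OF v(1), of M] by (intro that[OF v(1)] antisym)
qed

lemma abs_min_qform_diff_le: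
  assumes "B \<noteq> {}"
  shows "\<bar>min_qform M - min_qform N\<bar> \<le> mnorm (M - N)"
proof -
  have le: "min_qform M \<le> min_qform N + mnorm (M - N)" for M N
  proof -
    obtain v where v: "v \<in> unit_vectors" "qform v N = min_qform N"
      using min_qform_attained[OF assms] .
    have "min_qform M \<le> qform v N + qform v (M - N)"
      using min_qform_le[OF v(1), of M] by (simp add: qform_diff)
    then show ?thesis using abs_qform_le_mnorm[OF v(1), of "M - N"] v(2) by simp
  qed
  have "mnorm (N - M) = mnorm (M - N)"
    unfolding mnorm_def by (simp add: abs_minus_commute)
  then show ?thesis using le[of M N] le[of N M] by (simp add: abs_le_iff)
qed

lemma has_derivative_qform_at_minimum:
  assumes deriv: "has_mderiv M (mprod C (M t) + mprod (M t) (mtrans C)) t"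
    and sym: "symmetric_on B (M t)" and v: "v \<in> unit_vectors"
    and min: "\<And>w. w \<in> unit_vectors \<Longrightarrow> qform v (M t) \<le> qform w (M t)"
  shows "((\<lambda>s. qform v (M s)) has_real_derivative 2 * qform v (M t) * qform v C) (at t)"
proof -
  have "qform v (mprod C (M t)) = qform v (M t) * qform v C"
    by (intro qform_mprod_eigenvector min_qform_vector_is_eigenvector sym v min)
  moreover have "qform v (mprod (M t) (mtrans C)) = qform v (mprod C (M t))"
  proof -
    have "mprod C (mtrans (M t)) = mprod C (M t)"
      using sym by (auto intro!: ext sum.cong simp: mprod_def mtrans_def symmetric_on_def)
    then show ?thesis
      by (metis qform_mtrans mtrans_mprod mtrans_mtrans)
  qed
  moreover have "((\<lambda>s. qform v (M s)) has_real_derivative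
      qform v (mprod C (M t) + mprod (M t) (mtrans C))) (at t)"
    using deriv unfolding qform_def has_mderiv_def
    by (intro DERIV_sum DERIV_cmult DERIV_cmult_right) blast
  ultimately show ?thesis by (simp add: qform_add mult_ac)
qed

section \<open>Linear matrix differential equations\<close>

definition mcont_with_limit :: "real \<Rightarrow> real \<Rightarrow> (real \<Rightarrow> bmat) \<Rightarrow> bool" where
  "mcont_with_limit a b C \<longleftrightarrow>
     (\<exists>L. mtendsto C L (at_right a)) \<and> (\<forall>t\<in>{a<..<b}. mtendsto C (C t) (at t))"

lemma mcont_with_limitI:
  "mtendsto C L (at_right a) \<Longrightarrow> (\<And>t. t \<in> {a<..<b} \<Longrightarrow> mtendsto C (C t) (at t)) \<Longrightarrow>
    mcont_with_limit a b C"
  unfolding mcont_with_limit_def by blast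

lemma mcont_with_limit_const: "mcont_with_limit a b (\<lambda>s. P)"
  by (rule mcont_with_limitI[OF mtendsto_const mtendsto_const])

lemma mcont_with_limit_binop:
  assumes op: "\<And>F M N L L'. mtendsto M L F \<Longrightarrow> mtendsto N L' F \<Longrightarrow>
      mtendsto (\<lambda>s. f (M s) (N s)) (f L L') F"
    and M: "mcont_with_limit a b M" and N: "mcont_with_limit a b N"
  shows "mcont_with_limit a b (\<lambda>s. f (M s) (N s))"
proof -
  obtain L L' where "mtendsto M L (at_right a)" "mtendsto N L' (at_right a)"
    using M N unfolding mcont_with_limit_def by blast
  then show ?thesis
    using M N unfolding mcont_with_limit_def by (blast intro: op)
qed

lemma mcont_with_limit_unop:
  assumes op: "\<And>F M L. mtendsto M L F \<Longrightarrow> mtendsto (\<lambda>s. f (M s)) (f L) F"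
    and M: "mcont_with_limit a b M"
  shows "mcont_with_limit a b (\<lambda>s. f (M s))"
  using M unfolding mcont_with_limit_def by (blast intro: op)

lemmas mcont_with_limit_add = mcont_with_limit_binop[of "(+)", OF mtendsto_add]
lemmas mcont_with_limit_mprod = mcont_with_limit_binop[of mprod, OF mtendsto_mprod]
lemmas mcont_with_limit_uminus = mcont_with_limit_unop[of uminus, OF mtendsto_uminus]
lemmas mcont_with_limit_mtrans = mcont_with_limit_unop[of mtrans, OF mtendsto_mtrans]

lemmas mcont_with_limit_intros = mcont_with_limit_const mcont_with_limit_add
  mcont_with_limit_mprod mcont_with_limit_uminus mcont_with_limit_mtrans

lemma continuous_on_entry_extend:
  assumes "a < c" "mtendsto C L (at_right a)" "\<And>t. t \<in> {a<..c} \<Longrightarrow> mtendsto C (C t) (at t)"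
  shows "continuous_on {a..c} (\<lambda>s. (if s = a then L else C s) x y)"
proof -
  have "((\<lambda>s. C s x y) \<longlongrightarrow> L x y) (at_right a)"
    using assms(2) unfolding mtendsto_def by blast
  moreover have "isCont (\<lambda>s. C s x y) t" if "t \<in> {a<..c}" for t
    using assms(3)[OF that] unfolding mtendsto_def isCont_def by blast
  ultimately have "continuous_on {a..c} (\<lambda>s. if s = a then L x y else C s x y)"
    by (rule continuous_on_extend_right_limit[OF \<open>a < c\<close>])
  then show ?thesis by (simp add: if_distrib[of "\<lambda>M. M x y"])
qed

lemma mcont_with_limit_bounded:
  assumes "mcont_with_limit a b C" "a < c" "c < b"
  obtains K where "\<And>t. t \<in> {a<..c} \<Longrightarrow> mnorm (C t) \<le> K"
proof -
  obtain L where L: "mtendsto C L (at_right a)"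
    using assms(1) by (auto simp: mcont_with_limit_def)
  define Ce where "Ce s = (if s = a then L else C s)" for s
  have "continuous_on {a..c} (\<lambda>s. Ce s x y)" for x y
    unfolding Ce_def using assms
    by (intro continuous_on_entry_extend L) (auto simp: mcont_with_limit_def)
  then have "continuous_on {a..c} (\<lambda>s. mnorm (Ce s))"
    unfolding mnorm_def by (intro continuous_intros)
  then obtain s0 where s0: "\<forall>s\<in>{a..c}. mnorm (Ce s) \<le> mnorm (Ce s0)"
    using continuous_attains_sup[of "{a..c}"] \<open>a < c\<close> by fastforce
  have "mnorm (C t) \<le> mnorm (Ce s0)" if "t \<in> {a<..c}" for t
    using s0 that by (auto simp: Ce_def split: if_splits)
  then show ?thesis using that by blast
qed

lemma continuous_on_min_qform:
  assumes "B \<noteq> {}" and cont: "\<And>x y. continuous_on S (\<lambda>s. M s x y)"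
  shows "continuous_on S (\<lambda>s. min_qform (M s))"
  unfolding continuous_on_def
proof
  fix s assume "s \<in> S"
  have "continuous_on S (\<lambda>r. mnorm (M r - M s))"
    unfolding mnorm_def by (auto intro!: continuous_intros cont)
  then have "((\<lambda>r. mnorm (M r - M s)) \<longlongrightarrow> mnorm (M s - M s)) (at s within S)"
    using \<open>s \<in> S\<close> unfolding continuous_on_def by blast
  then have "((\<lambda>r. mnorm (M r - M s)) \<longlongrightarrow> 0) (at s within S)"
    by (simp add: mnorm_def)
  then have "((\<lambda>r. min_qform (M r) - min_qform (M s)) \<longlongrightarrow> 0) (at s within S)"
    by (rule Lim_null_comparison[rotated]) (simp add: abs_min_qform_diff_le[OF assms(1)])
  then show "((\<lambda>r. min_qform (M r)) \<longlongrightarrow> min_qform (M s)) (at s within S)"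
    by (simp add: LIM_zero_iff)
qed

lemma min_qform_touched_from_above:
  assumes "B \<noteq> {}"
    and deriv: "has_mderiv M (mprod C (M t) + mprod (M t) (mtrans C)) t"
    and sym: "symmetric_on B (M t)" and C: "mnorm C \<le> K" and nonpos: "min_qform (M t) \<le> 0"
  obtains h D where "h t = min_qform (M t)" "\<And>s. min_qform (M s) \<le> h s"
    "(h has_real_derivative D) (at t)" "2 * K * min_qform (M t) \<le> D"
proof -
  obtain v where v: "v \<in> unit_vectors" "qform v (M t) = min_qform (M t)"
    using min_qform_attained[OF assms(1)] .
  have "qform v (M t) \<le> qform w (M t)" if "w \<in> unit_vectors" for w
    using min_qform_le[OF that] v(2) by simp
  then have "((\<lambda>s. qform v (M s)) has_real_derivative 2 * min_qform (M t) * qform v C) (at t)"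
    using has_derivative_qform_at_minimum[OF deriv sym v(1)] v(2) by simp
  moreover have "2 * K * min_qform (M t) \<le> 2 * min_qform (M t) * qform v C"
  proof -
    have "qform v C \<le> K" using abs_qform_le_mnorm[OF v(1), of C] C by simp
    then have "min_qform (M t) * K \<le> min_qform (M t) * qform v C"
      using nonpos by (rule mult_left_mono_neg)
    then show ?thesis by (simp add: mult_ac)
  qed
  ultimately show ?thesis
    using that[of "\<lambda>s. qform v (M s)"] v min_qform_le by blast
qed

lemma lyapunov_ode_psd:
  assumes "a < b"
    and lim: "mtendsto M M0 (at_right a)" and psd: "\<And>v. 0 \<le> qform v M0"
    and deriv: "\<And>s. s \<in> {a<..<b} \<Longrightarrow>
      has_mderiv M (mprod (C s) (M s) + mprod (M s) (mtrans (C s))) s"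
    and sym: "\<And>s. s \<in> {a<..<b} \<Longrightarrow> symmetric_on B (M s)"
    and C: "mcont_with_limit a b C"
    and t: "t \<in> {a<..<b}"
  shows "0 \<le> qform v (M t)"
proof (cases "B = {}")
  case True
  then show ?thesis unfolding qform_def by simp
next
  case False
  obtain K where K: "\<And>s. s \<in> {a<..t} \<Longrightarrow> mnorm (C s) \<le> K"
    using mcont_with_limit_bounded[OF C] t by auto
  define Me where "Me s = (if s = a then M0 else M s)" for s
  define m where "m s = min_qform (Me s)" for s
  have "continuous_on {a..t} (\<lambda>s. Me s x y)" for x y
    unfolding Me_def using t
    by (intro continuous_on_entry_extend lim has_mderiv_imp_mtendsto[OF deriv]) auto
  then have "continuous_on {a..t} m"
    unfolding m_def by (rule continuous_on_min_qform[OF False])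
  \<comment> \<open>\<open>m\<close> is the least eigenvalue of \<open>M\<close>, which is read as \<open>M0\<close> at \<open>a\<close>; a minimizing
    eigenvector touches it from above.\<close>
  then have "0 \<le> m t"
  proof (rule nonneg_by_comparison[where L = "2 * K"])
    obtain v where "qform v M0 = min_qform M0"
      using min_qform_attained[OF False] .
    then show "0 \<le> m a" using psd[of v] by (simp add: m_def Me_def)
  next
    fix \<tau> assume \<tau>: "a < \<tau>" "\<tau> \<le> t" "m \<tau> < 0"
    then have \<tau>b: "\<tau> \<in> {a<..<b}" using t by auto
    have "M \<tau> = Me \<tau>" using \<tau> by (simp add: Me_def)
    have "has_mderiv Me (mprod (C \<tau>) (M \<tau>) + mprod (M \<tau>) (mtrans (C \<tau>))) \<tau>"
      by (rule has_mderiv_transform_open[OF deriv[OF \<tau>b], of "{a<..}"])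
        (use \<tau> in \<open>auto simp: Me_def\<close>)
    then have "has_mderiv Me (mprod (C \<tau>) (Me \<tau>) + mprod (Me \<tau>) (mtrans (C \<tau>))) \<tau>"
      unfolding \<open>M \<tau> = Me \<tau>\<close> .
    moreover have "symmetric_on B (Me \<tau>)" using sym[OF \<tau>b] \<tau> by (simp add: Me_def)
    ultimately show "\<exists>h D. h \<tau> = m \<tau> \<and> (\<forall>s. a \<le> s \<longrightarrow> s < \<tau> \<longrightarrow> m s \<le> h s) \<and>
        (h has_real_derivative D) (at \<tau>) \<and> 2 * K * m \<tau> \<le> D"
      using min_qform_touched_from_above[OF False _ _ K[of \<tau>]] \<tau> unfolding m_def
      by (metis greaterThanAtMost_iff less_imp_le)
  qed (use t in auto)
  then have "0 \<le> qform w (Me t)" if "w \<in> unit_vectors" for w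
    using min_qform_le[OF that, of "Me t"] by (simp add: m_def)
  then have "0 * (\<Sum>x\<in>B. (v x)\<^sup>2) \<le> qform v (Me t)"
    by (rule qform_ge_if_unit_vectors_ge)
  then show ?thesis using t by (simp add: Me_def)
qed

definition sqnorm :: "bmat \<Rightarrow> real" where
  "sqnorm M = (\<Sum>x\<in>B. \<Sum>y\<in>B. (M x y)\<^sup>2)"

lemma has_derivative_sqnorm:
  assumes "has_mderiv M D t"
  shows "((\<lambda>s. sqnorm (M s)) has_real_derivative 2 * (\<Sum>x\<in>B. \<Sum>y\<in>B. M t x y * D x y)) (at t)"
proof -
  have "((\<lambda>s. M s x y) has_real_derivative D x y) (at t)" for x y
    using assms unfolding has_mderiv_def by blast
  then have "((\<lambda>s. sqnorm (M s)) has_real_derivative (\<Sum>x\<in>B. \<Sum>y\<in>B. 2 * (M t x y * D x y))) (at t)"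
    unfolding sqnorm_def by (auto intro!: DERIV_sum derivative_eq_intros)
  then show ?thesis by (simp add: sum_distrib_left)
qed

lemma sum_abs_mult_le_sqnorm:
  "(\<Sum>x\<in>B. \<Sum>y\<in>B. \<Sum>z\<in>B. \<bar>M x y\<bar> * \<bar>M z y\<bar>) \<le> card B * sqnorm M"
  "(\<Sum>x\<in>B. \<Sum>y\<in>B. \<Sum>z\<in>B. \<bar>M x y\<bar> * \<bar>M x z\<bar>) \<le> card B * sqnorm M"
proof -
  have amgm: "(\<Sum>x\<in>B. \<Sum>y\<in>B. \<Sum>z\<in>B. \<bar>p x y z\<bar> * \<bar>q x y z\<bar>) \<le>
      ((\<Sum>x\<in>B. \<Sum>y\<in>B. \<Sum>z\<in>B. (p x y z)\<^sup>2) + (\<Sum>x\<in>B. \<Sum>y\<in>B. \<Sum>z\<in>B. (q x y z)\<^sup>2)) / 2"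
    for p q :: "box \<Rightarrow> box \<Rightarrow> box \<Rightarrow> real"
  proof -
    have "\<bar>p x y z\<bar> * \<bar>q x y z\<bar> \<le> ((p x y z)\<^sup>2 + (q x y z)\<^sup>2) / 2" for x y z
      using sum_squares_bound[of "\<bar>p x y z\<bar>" "\<bar>q x y z\<bar>"] by (simp add: power2_eq_square)
    then have "(\<Sum>x\<in>B. \<Sum>y\<in>B. \<Sum>z\<in>B. \<bar>p x y z\<bar> * \<bar>q x y z\<bar>) \<le>
        (\<Sum>x\<in>B. \<Sum>y\<in>B. \<Sum>z\<in>B. ((p x y z)\<^sup>2 + (q x y z)\<^sup>2) / 2)"
      by (intro sum_mono)
    then show ?thesis
      by (simp add: sum.distrib sum_divide_distrib[symmetric] add_divide_distrib)
  qed
  have e1: "(\<Sum>x\<in>B. \<Sum>y\<in>B. \<Sum>z\<in>B. (M x y)\<^sup>2) = card B * sqnorm M"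
    and e2: "(\<Sum>x\<in>B. \<Sum>y\<in>B. \<Sum>z\<in>B. (M x z)\<^sup>2) = card B * sqnorm M"
    by (simp_all add: sqnorm_def sum_distrib_left mult.commute)
  have e3: "(\<Sum>x\<in>B. \<Sum>y\<in>B. \<Sum>z\<in>B. (M z y)\<^sup>2) = card B * sqnorm M"
    by (simp add: sqnorm_def) (subst sum.swap, simp)
  show "(\<Sum>x\<in>B. \<Sum>y\<in>B. \<Sum>z\<in>B. \<bar>M x y\<bar> * \<bar>M z y\<bar>) \<le> card B * sqnorm M"
    using amgm[of "\<lambda>x y z. M x y" "\<lambda>x y z. M z y"] unfolding e1 e3 by (simp add: mult.commute)
  show "(\<Sum>x\<in>B. \<Sum>y\<in>B. \<Sum>z\<in>B. \<bar>M x y\<bar> * \<bar>M x z\<bar>) \<le> card B * sqnorm M"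
    using amgm[of "\<lambda>x y z. M x y" "\<lambda>x y z. M x z"] unfolding e1 e2 by (simp add: mult.commute)
qed

lemma abs_inner_sylvester_le:
  assumes C1: "mnorm C1 \<le> K" and C2: "mnorm C2 \<le> K"
  shows "\<bar>\<Sum>x\<in>B. \<Sum>y\<in>B. M x y * (mprod C1 M + mprod M C2) x y\<bar> \<le> 2 * K * card B * sqnorm M"
proof -
  have K: "0 \<le> K" using C1 mnorm_nonneg order_trans by blast
  have "\<bar>\<Sum>x\<in>B. \<Sum>y\<in>B. M x y * (mprod C1 M + mprod M C2) x y\<bar>
      \<le> (\<Sum>x\<in>B. \<Sum>y\<in>B. \<Sum>z\<in>B. K * (\<bar>M x y\<bar> * \<bar>M z y\<bar>) + K * (\<bar>M x y\<bar> * \<bar>M x z\<bar>))"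
  proof (intro order_trans[OF sum_abs] sum_mono order_trans[OF sum_abs])
    fix x y assume xy: "x \<in> B" "y \<in> B"
    have "\<bar>C1 x z * M z y\<bar> \<le> K * \<bar>M z y\<bar>" "\<bar>M x z * C2 z y\<bar> \<le> K * \<bar>M x z\<bar>" if "z \<in> B" for z
    proof -
      have "\<bar>C1 x z\<bar> \<le> K" "\<bar>C2 z y\<bar> \<le> K"
        using abs_entry_le_mnorm[of x z C1] abs_entry_le_mnorm[of z y C2] xy that C1 C2 by auto
      then show "\<bar>C1 x z * M z y\<bar> \<le> K * \<bar>M z y\<bar>" "\<bar>M x z * C2 z y\<bar> \<le> K * \<bar>M x z\<bar>"
        unfolding abs_mult by (auto simp: mult.commute[of "\<bar>M x z\<bar>"] intro: mult_right_mono)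
    qed
    then have "\<bar>(mprod C1 M + mprod M C2) x y\<bar> \<le> (\<Sum>z\<in>B. K * \<bar>M z y\<bar> + K * \<bar>M x z\<bar>)"
      using xy unfolding mprod_def
      by (auto simp: sum.distrib intro!: order_trans[OF abs_triangle_ineq] add_mono
          order_trans[OF sum_abs] sum_mono)
    then have "\<bar>M x y * (mprod C1 M + mprod M C2) x y\<bar> \<le>
        \<bar>M x y\<bar> * (\<Sum>z\<in>B. K * \<bar>M z y\<bar> + K * \<bar>M x z\<bar>)"
      unfolding abs_mult by (rule mult_left_mono) simp
    then show "\<bar>M x y * (mprod C1 M + mprod M C2) x y\<bar> \<le>
        (\<Sum>z\<in>B. K * (\<bar>M x y\<bar> * \<bar>M z y\<bar>) + K * (\<bar>M x y\<bar> * \<bar>M x z\<bar>))"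
      by (simp add: sum_distrib_left algebra_simps)
  qed
  also have "\<dots> = K * (\<Sum>x\<in>B. \<Sum>y\<in>B. \<Sum>z\<in>B. \<bar>M x y\<bar> * \<bar>M z y\<bar>)
      + K * (\<Sum>x\<in>B. \<Sum>y\<in>B. \<Sum>z\<in>B. \<bar>M x y\<bar> * \<bar>M x z\<bar>)"
    by (simp add: sum.distrib sum_distrib_left)
  also have "\<dots> \<le> K * (card B * sqnorm M) + K * (card B * sqnorm M)"
    by (intro add_mono mult_left_mono sum_abs_mult_le_sqnorm K)
  finally show ?thesis by (simp add: algebra_simps)
qed

lemma sylvester_ode_zero:
  assumes "a < b" and lim: "mtendsto E 0 (at_right a)"
    and deriv: "\<And>s. s \<in> {a<..<b} \<Longrightarrow> has_mderiv E (mprod (C1 s) (E s) + mprod (E s) (C2 s)) s"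
    and C1: "mcont_with_limit a b C1" and C2: "mcont_with_limit a b C2"
    and t: "t \<in> {a<..<b}" and xy: "x \<in> B" "y \<in> B"
  shows "E t x y = 0"
proof -
  obtain K1 K2 where K1: "\<And>s. s \<in> {a<..t} \<Longrightarrow> mnorm (C1 s) \<le> K1"
    and K2: "\<And>s. s \<in> {a<..t} \<Longrightarrow> mnorm (C2 s) \<le> K2"
    using mcont_with_limit_bounded[OF C1] mcont_with_limit_bounded[OF C2] t
    by (metis greaterThanLessThan_iff)
  define K where "K = max K1 K2"
  define Ee where "Ee s = (if s = a then 0 else E s)" for s
  define m where "m s = - sqnorm (Ee s)" for s
  have "continuous_on {a..t} (\<lambda>s. Ee s x y)" for x y
    unfolding Ee_def using t
    by (intro continuous_on_entry_extend lim has_mderiv_imp_mtendsto[OF deriv]) auto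
  then have "continuous_on {a..t} m"
    unfolding m_def sqnorm_def by (intro continuous_intros)
  then have "0 \<le> m t"
  proof (rule nonneg_by_comparison[where L = "2 * (2 * K * card B)"])
    fix \<tau> assume \<tau>: "a < \<tau>" "\<tau> \<le> t"
    then have \<tau>b: "\<tau> \<in> {a<..<b}" using t by auto
    define D where
      "D = - (2 * (\<Sum>x\<in>B. \<Sum>y\<in>B. E \<tau> x y * (mprod (C1 \<tau>) (E \<tau>) + mprod (E \<tau>) (C2 \<tau>)) x y))"
    have "(m has_real_derivative D) (at \<tau>)"
      unfolding m_def D_def
      by (rule DERIV_minus, rule has_field_derivative_transform_within_open
          [OF has_derivative_sqnorm[OF deriv[OF \<tau>b]], where S = "{a<..}"])
        (use \<tau> in \<open>auto simp: Ee_def\<close>)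
    moreover have "2 * (2 * K * card B) * m \<tau> \<le> D"
    proof -
      have "mnorm (C1 \<tau>) \<le> K" "mnorm (C2 \<tau>) \<le> K"
        using K1[of \<tau>] K2[of \<tau>] \<tau> by (auto simp: K_def)
      from abs_inner_sylvester_le[OF this, of "E \<tau>"]
      have "\<bar>D / 2\<bar> \<le> 2 * K * card B * sqnorm (E \<tau>)"
        by (simp add: D_def)
      then show ?thesis using \<tau> by (simp add: m_def Ee_def abs_le_iff)
    qed
    ultimately show "\<exists>h D. h \<tau> = m \<tau> \<and> (\<forall>s. a \<le> s \<longrightarrow> s < \<tau> \<longrightarrow> m s \<le> h s) \<and>
        (h has_real_derivative D) (at \<tau>) \<and> 2 * (2 * K * card B) * m \<tau> \<le> D"
      by blast
  qed (use t in \<open>auto simp: m_def Ee_def sqnorm_def\<close>)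
  then have "sqnorm (E t) = 0"
    using t by (simp add: m_def Ee_def sqnorm_def sum_nonneg order_antisym)
  then show ?thesis
    using xy finite_B by (simp add: sqnorm_def sum_nonneg_eq_0_iff sum_nonneg)
qed

end

section \<open>The Riccati equation\<close>

locale riccati = finite_index B for B +
  fixes G1 G2 Q :: bmat and V W U :: "real \<Rightarrow> bmat" and T \<delta> :: real
  assumes supported_G2: "supported G2"
    and symmetric_G2: "mtrans G2 = G2" and psd_G2: "\<And>v. 0 \<le> qform v G2"
    and supported_Q: "supported Q" and symmetric_Q: "mtrans Q = Q"
    and supported_V: "\<And>t. supported (V t)"
    and deriv_V: "\<And>t. t \<in> {0<..<T} \<Longrightarrow> has_mderiv V (W t) t"
    and ode: "\<And>t. t \<in> {0<..<T} \<Longrightarrow>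
      W t = - mprod G1 (V t) - mprod (V t) (mtrans G1) - Q - mprod (mprod (V t) G2) (V t)"
    and supported_U: "\<And>t. supported (U t)"
    and inverse: "\<And>t. t \<in> {0<..<\<delta>} \<Longrightarrow> mprod (U t) (V t) = mid \<and> mprod (V t) (U t) = mid"
    and lim_U: "mtendsto U 0 (at_right 0)"
    and \<delta>: "0 < \<delta>" "\<delta> \<le> T"
begin

definition dual_rhs :: "real \<Rightarrow> bmat" where
  "dual_rhs t = G2 + mprod (U t) G1 + mprod (mtrans G1) (U t) + mprod (mprod (U t) Q) (U t)"

lemma dual_rhs_eq:
  assumes t: "t \<in> {0<..<\<delta>}"
  shows "dual_rhs t = - mprod (mprod (U t) (W t)) (U t)"
  using inverse[OF t] t \<delta> supported_G2 supported_U
  by (simp add: ode dual_rhs_def mprod_simps mprod_cancel_left mprod_mid_left mprod_mid_right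
      mrestrict_supported supported_intros algebra_simps)

lemma deriv_U:
  assumes t: "t \<in> {0<..<\<delta>}"
  shows "has_mderiv U (dual_rhs t) t"
  unfolding dual_rhs_eq[OF t]
  using t \<delta> inverse supported_U deriv_V by (intro has_mderiv_inverse[of "{0<..<\<delta>}" _ _ V]) auto

lemma mcont_with_limit_U: "mcont_with_limit 0 \<delta> U"
  by (rule mcont_with_limitI[OF lim_U has_mderiv_imp_mtendsto[OF deriv_U]])

lemma symmetric_U:
  assumes t: "t \<in> {0<..<\<delta>}"
  shows "mtrans (U t) = U t"
proof -
  define C1 where "C1 s = mtrans G1 + mprod (mtrans (U s)) Q" for s
  define C2 where "C2 s = G1 + mprod Q (U s)" for s
  have C1: "mcont_with_limit 0 \<delta> C1"
    unfolding C1_def by (intro mcont_with_limit_intros mcont_with_limit_U)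
  have C2: "mcont_with_limit 0 \<delta> C2"
    unfolding C2_def by (intro mcont_with_limit_intros mcont_with_limit_U)
  have deriv: "has_mderiv (\<lambda>s. U s - mtrans (U s))
      (mprod (C1 s) (U s - mtrans (U s)) + mprod (U s - mtrans (U s)) (C2 s)) s"
    if "s \<in> {0<..<\<delta>}" for s
  proof -
    have "has_mderiv (\<lambda>s. U s - mtrans (U s)) (dual_rhs s - mtrans (dual_rhs s)) s"
      by (intro has_mderiv_intros deriv_U that)
    moreover have "dual_rhs s - mtrans (dual_rhs s) =
        mprod (C1 s) (U s - mtrans (U s)) + mprod (U s - mtrans (U s)) (C2 s)"
      by (simp add: dual_rhs_def C1_def C2_def mprod_simps mtrans_simps symmetric_Q symmetric_G2
          algebra_simps)
    ultimately show ?thesis by simp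
  qed
  have lim: "mtendsto (\<lambda>s. U s - mtrans (U s)) 0 (at_right 0)"
    using mtendsto_diff[OF lim_U mtendsto_mtrans[OF lim_U]] by (simp add: mtrans_zero)
  have "mtrans (U t) x y = U t x y" if "x \<in> B" "y \<in> B" for x y
    using sylvester_ode_zero[OF \<delta>(1) lim deriv C1 C2 t that] by simp
  then show ?thesis
    by (rule supported_eqI[OF supported_mtrans[OF supported_U] supported_U])
qed

lemma psd_dual_rhs:
  assumes t: "t \<in> {0<..<\<delta>}"
  shows "0 \<le> qform v (dual_rhs t)"
proof -
  define C where "C s = mtrans G1 + mprod (U s) Q" for s
  have "mcont_with_limit 0 \<delta> C"
    unfolding C_def by (intro mcont_with_limit_intros mcont_with_limit_U)
  moreover have "mtendsto dual_rhs G2 (at_right 0)"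
  proof -
    have "mtendsto dual_rhs
        (G2 + mprod 0 G1 + mprod (mtrans G1) 0 + mprod (mprod 0 Q) 0) (at_right 0)"
      unfolding dual_rhs_def[abs_def] by (intro mtendsto_intros lim_U)
    then show ?thesis by (simp add: mprod_zero_left mprod_zero_right)
  qed
  moreover have
    "has_mderiv dual_rhs (mprod (C s) (dual_rhs s) + mprod (dual_rhs s) (mtrans (C s))) s"
    if s: "s \<in> {0<..<\<delta>}" for s
  proof -
    have "has_mderiv dual_rhs (0 + (mprod (dual_rhs s) G1 + mprod (U s) 0) +
        (mprod 0 (U s) + mprod (mtrans G1) (dual_rhs s)) +
        (mprod (mprod (dual_rhs s) Q + mprod (U s) 0) (U s) +
         mprod (mprod (U s) Q) (dual_rhs s))) s"
      by (subst (1) dual_rhs_def[abs_def]) (intro has_mderiv_intros deriv_U[OF s])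
    then show ?thesis
      using symmetric_U[OF s]
      by (simp add: C_def mprod_simps mtrans_simps symmetric_Q algebra_simps)
  qed
  moreover have "symmetric_on B (dual_rhs s)" if "s \<in> {0<..<\<delta>}" for s
    using symmetric_U[OF that]
    by (intro symmetric_on_if_mtrans_eq)
      (simp add: dual_rhs_def mtrans_simps mprod_assoc symmetric_Q symmetric_G2)
  ultimately show ?thesis
    using lyapunov_ode_psd[OF \<delta>(1) _ psd_G2 _ _ _ t] by blast
qed

lemma supported_W: "t \<in> {0<..<T} \<Longrightarrow> supported (W t)"
  by (simp add: ode supported_intros supported_Q)

lemma symmetric_V_near_0:
  assumes t: "t \<in> {0<..<\<delta>}"
  shows "mtrans (V t) = V t"
proof -
  have "mprod (mtrans (V t)) (U t) = mtrans (mprod (mtrans (U t)) (V t))"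
    by (simp add: mtrans_simps)
  also have "\<dots> = mid"
    using inverse[OF t] symmetric_U[OF t] by (simp add: mtrans_mid)
  finally have "mprod (mtrans (V t)) (mprod (U t) (V t)) = V t"
    using supported_V by (simp add: mprod_cancel_left)
  then show ?thesis
    using inverse[OF t] supported_V
    by (simp add: mprod_mid_right mrestrict_supported supported_mtrans)
qed

lemma nonpos_W_near_0:
  assumes t: "t \<in> {0<..<\<delta>}"
  shows "qform v (W t) \<le> 0"
proof -
  have tT: "t \<in> {0<..<T}" using t \<delta> by auto
  have "mprod (mprod (V t) (dual_rhs t)) (V t) = - W t"
    using inverse[OF t] supported_W[OF tT]
    by (simp add: dual_rhs_eq[OF t] mprod_simps mprod_cancel_left mprod_mid_right
        mrestrict_supported supported_mprod)
  then have "W t = - mprod (mprod (mtrans (V t)) (dual_rhs t)) (V t)"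
    by (simp add: symmetric_V_near_0[OF t])
  then have "qform v (W t) = - qform (\<lambda>y. \<Sum>x\<in>B. V t y x * v x) (dual_rhs t)"
    by (simp add: qform_uminus qform_congruence)
  then show ?thesis using psd_dual_rhs[OF t] by simp
qed

lemma mcont_with_limit_V:
  assumes "0 < s" "s < T"
  shows "mcont_with_limit s T V"
  using assms by (intro mcont_with_limitI[where L = "V s"] mtendsto_at_right
      has_mderiv_imp_mtendsto[OF deriv_V]) auto

lemma deriv_W:
  assumes t: "t \<in> {0<..<T}"
  shows "has_mderiv W (- mprod G1 (W t) - mprod (W t) (mtrans G1) -
      (mprod (mprod (W t) G2) (V t) + mprod (mprod (V t) G2) (W t))) t"
proof -
  let ?rhs = "\<lambda>t. - mprod G1 (V t) - mprod (V t) (mtrans G1) - Q - mprod (mprod (V t) G2) (V t)"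
  have "has_mderiv ?rhs (- (mprod 0 (V t) + mprod G1 (W t)) -
      (mprod (W t) (mtrans G1) + mprod (V t) 0) - 0 -
      (mprod (mprod (W t) G2 + mprod (V t) 0) (V t) + mprod (mprod (V t) G2) (W t))) t"
    by (intro has_mderiv_intros deriv_V[OF t])
  from has_mderiv_transform_open[OF this open_greaterThanLessThan t, of W] show ?thesis
    by (simp add: ode mprod_zero_left mprod_zero_right)
qed

lemma symmetric_V:
  assumes t: "t \<in> {0<..<T}"
  shows "mtrans (V t) = V t"
proof -
  define s where "s = min \<delta> t / 2"
  have s: "s \<in> {0<..<\<delta>}" "s < t" using t \<delta> by (auto simp: s_def)
  define C1 where "C1 r = - (G1 + mprod (mtrans (V r)) G2)" for r
  define C2 where "C2 r = - (mtrans G1 + mprod G2 (V r))" for r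
  have V: "mcont_with_limit s T V" using s t by (intro mcont_with_limit_V) auto
  have C1: "mcont_with_limit s T C1"
    unfolding C1_def by (intro mcont_with_limit_intros V)
  have C2: "mcont_with_limit s T C2"
    unfolding C2_def by (intro mcont_with_limit_intros V)
  have "mtendsto (\<lambda>r. V r - mtrans (V r)) (V s - mtrans (V s)) (at_right s)"
    using s \<delta> by (intro mtendsto_at_right mtendsto_intros has_mderiv_imp_mtendsto[OF deriv_V]) auto
  then have lim: "mtendsto (\<lambda>r. V r - mtrans (V r)) 0 (at_right s)"
    by (simp add: symmetric_V_near_0[OF s(1)])
  have deriv: "has_mderiv (\<lambda>r. V r - mtrans (V r))
      (mprod (C1 r) (V r - mtrans (V r)) + mprod (V r - mtrans (V r)) (C2 r)) r"
    if r: "r \<in> {s<..<T}" for r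
  proof -
    have rT: "r \<in> {0<..<T}" using r s by auto
    have "has_mderiv (\<lambda>r. V r - mtrans (V r)) (W r - mtrans (W r)) r"
      by (intro has_mderiv_intros deriv_V[OF rT])
    moreover have "W r - mtrans (W r) =
        mprod (C1 r) (V r - mtrans (V r)) + mprod (V r - mtrans (V r)) (C2 r)"
      by (simp add: ode[OF rT] C1_def C2_def mprod_simps mtrans_simps symmetric_Q symmetric_G2
          algebra_simps)
    ultimately show ?thesis by simp
  qed
  have "mtrans (V t) x y = V t x y" if "x \<in> B" "y \<in> B" for x y
    using sylvester_ode_zero[OF _ lim deriv C1 C2 _ that] s t by simp
  then show ?thesis
    by (rule supported_eqI[OF supported_mtrans[OF supported_V] supported_V])
qed

lemma nonpos_W:
  assumes t: "t \<in> {0<..<T}"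
  shows "qform v (W t) \<le> 0"
proof -
  define s where "s = min \<delta> t / 2"
  have s: "s \<in> {0<..<\<delta>}" "s < t" using t \<delta> by (auto simp: s_def)
  define C where "C r = - (G1 + mprod (V r) G2)" for r
  have V: "mcont_with_limit s T V" using s t by (intro mcont_with_limit_V) auto
  have C: "mcont_with_limit s T C"
    unfolding C_def by (intro mcont_with_limit_intros V)
  have lim: "mtendsto (\<lambda>r. - W r) (- W s) (at_right s)"
    using s \<delta> by (intro mtendsto_at_right mtendsto_intros has_mderiv_imp_mtendsto[OF deriv_W]) auto
  have psd: "0 \<le> qform w (- W s)" for w
    using nonpos_W_near_0[OF s(1)] by (simp add: qform_uminus)
  have deriv: "has_mderiv (\<lambda>r. - W r) (mprod (C r) (- W r) + mprod (- W r) (mtrans (C r))) r"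
    if r: "r \<in> {s<..<T}" for r
  proof -
    have rT: "r \<in> {0<..<T}" using r s by auto
    show ?thesis
      using has_mderiv_uminus[OF deriv_W[OF rT]] symmetric_V[OF rT]
      by (simp add: C_def mprod_simps mtrans_simps symmetric_G2 algebra_simps)
  qed
  have sym: "symmetric_on B (- W r)" if r: "r \<in> {s<..<T}" for r
  proof -
    have rT: "r \<in> {0<..<T}" using r s by auto
    show ?thesis
      using symmetric_V[OF rT]
      by (intro symmetric_on_if_mtrans_eq)
        (simp add: ode[OF rT] mprod_simps mtrans_simps symmetric_Q symmetric_G2)
  qed
  have "0 \<le> qform v (- W t)"
    using s t by (intro lyapunov_ode_psd[OF _ lim psd deriv sym C]) auto
  then show ?thesis by (simp add: qform_uminus)
qed

end

section \<open>Young diagrams\<close>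

lemma finite_boxes: "finite (boxes ns)"
proof (rule finite_subset)
  show "boxes ns \<subseteq> {..length ns} \<times> {..sum_list ns}"
  proof
    fix p assume "p \<in> boxes ns"
    then obtain a i where p: "p = (a, i)" "1 \<le> a" "a \<le> length ns" "i \<le> ns ! (a - 1)"
      unfolding boxes_def by auto
    then have "ns ! (a - 1) \<le> sum_list ns" by (intro elem_le_sum_list) auto
    then show "p \<in> {..length ns} \<times> {..sum_list ns}" using p by auto
  qed
qed simp

lemma Gamma2_eq: "Gamma2 x y = (if x = y \<and> snd x = 1 then 1 else 0)"
  by (cases x; cases y) (auto simp: Gamma2_def)

context finite_index
begin

lemma mrestrict_apply: "x \<in> B \<Longrightarrow> y \<in> B \<Longrightarrow> mrestrict M x y = M x y"
  by (simp add: mrestrict_def)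

lemma qform_mrestrict: "qform v (mrestrict M) = qform v M"
  unfolding qform_def mrestrict_def by (intro sum.cong) auto

lemma qform_Gamma2_nonneg: "0 \<le> qform v Gamma2"
proof -
  have "(\<Sum>y\<in>B. v x * Gamma2 x y * v y) = (if snd x = 1 then (v x)\<^sup>2 else 0)" if "x \<in> B" for x
    using that finite_B
    by (cases "snd x = 1") (simp_all add: Gamma2_eq power2_eq_square if_distrib[of "\<lambda>a. _ * a * _"]
        cong: if_cong)
  then show ?thesis
    unfolding qform_def by (simp add: sum_nonneg)
qed

lemma mmul_eq_mprod: "x \<in> B \<Longrightarrow> z \<in> B \<Longrightarrow> mmul B M N x z = mprod M N x z"
  by (simp add: mmul_def mprod_def)

lemma mprod_mmul_left: "mprod (mmul B M N) P = mprod (mprod M N) P"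
  by (auto intro!: ext sum.cong simp: mprod_def mmul_def)

lemma has_mderiv_mrestrict:
  assumes "\<And>x y. x \<in> B \<Longrightarrow> y \<in> B \<Longrightarrow> ((\<lambda>s. M s x y) has_real_derivative D x y) (at t)"
  shows "has_mderiv (\<lambda>s. mrestrict (M s)) (mrestrict D) t"
  unfolding has_mderiv_def mrestrict_def using assms by (auto simp del: if_split)

lemma mtendsto_mrestrict:
  assumes "\<And>x y. x \<in> B \<Longrightarrow> y \<in> B \<Longrightarrow> ((\<lambda>s. M s x y) \<longlongrightarrow> L x y) F"
  shows "mtendsto (\<lambda>s. mrestrict (M s)) (mrestrict L) F"
  unfolding mtendsto_def mrestrict_def using assms by (auto simp del: if_split)

lemma is_inverse_mrestrict:
  assumes "is_inverse B M N"
  shows "mprod (mrestrict N) (mrestrict M) = mid \<and> mprod (mrestrict M) (mrestrict N) = mid"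
proof -
  have "mprod (mrestrict P) (mrestrict R) = mid"
    if "\<And>x z. x \<in> B \<Longrightarrow> z \<in> B \<Longrightarrow> mmul B P R x z = (if x = z then 1 else 0)" for P R
    by (rule supported_eqI[OF supported_mprod supported_mid])
      (simp add: that mprod_mrestrict_left mprod_mrestrict_right mmul_eq_mprod[symmetric] mid_def)
  then show ?thesis using assms unfolding is_inverse_def by simp
qed

lemma riccati_mrestrict:
  assumes Qsym: "symmetric_on B Q" and \<delta>: "0 < \<delta>" "\<delta> \<le> T"
    and deriv: "\<And>t x y. t \<in> {0<..<T} \<Longrightarrow> x \<in> B \<Longrightarrow> y \<in> B \<Longrightarrow>
      ((\<lambda>s. V s x y) has_real_derivative V' t x y) (at t)"
    and ode: "\<And>t x y. t \<in> {0<..<T} \<Longrightarrow> x \<in> B \<Longrightarrow> y \<in> B \<Longrightarrow>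
      V' t x y = - mmul B Gamma1 (V t) x y - mmul B (V t) (mtrans Gamma1) x y - Q x y
        - mmul B (mmul B (V t) Gamma2) (V t) x y"
    and inverse: "\<And>t. t \<in> {0<..<\<delta>} \<Longrightarrow> is_inverse B (V t) (U t)"
    and lim: "\<And>x y. x \<in> B \<Longrightarrow> y \<in> B \<Longrightarrow> ((\<lambda>t. U t x y) \<longlongrightarrow> 0) (at_right 0)"
  shows "riccati B (mrestrict Gamma1) (mrestrict Gamma2) (mrestrict Q)
    (\<lambda>t. mrestrict (V t)) (\<lambda>t. mrestrict (V' t)) (\<lambda>t. mrestrict (U t)) T \<delta>"
proof unfold_locales
  show "mtrans (mrestrict Gamma2) = mrestrict Gamma2" "mtrans (mrestrict Q) = mrestrict Q"
    using Qsym by (simp_all add: mtrans_mrestrict_eq symmetric_on_def Gamma2_eq)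
  show "0 \<le> qform v (mrestrict Gamma2)" for v
    by (simp add: qform_mrestrict qform_Gamma2_nonneg)
  show "has_mderiv (\<lambda>t. mrestrict (V t)) (mrestrict (V' t)) t" if "t \<in> {0<..<T}" for t
    using deriv[OF that] by (rule has_mderiv_mrestrict)
  show "mrestrict (V' t) = - mprod (mrestrict Gamma1) (mrestrict (V t)) -
      mprod (mrestrict (V t)) (mtrans (mrestrict Gamma1)) - mrestrict Q -
      mprod (mprod (mrestrict (V t)) (mrestrict Gamma2)) (mrestrict (V t))"
    if "t \<in> {0<..<T}" for t
    by (rule supported_eqI)
      (simp_all add: supported_intros ode[OF that] mmul_eq_mprod mprod_mmul_left mprod_simps
        mtrans_mrestrict mrestrict_apply)
  show "mprod (mrestrict (U t)) (mrestrict (V t)) = mid \<and>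
      mprod (mrestrict (V t)) (mrestrict (U t)) = mid" if "t \<in> {0<..<\<delta>}" for t
    using inverse[OF that] by (rule is_inverse_mrestrict)
  show "mtendsto (\<lambda>t. mrestrict (U t)) 0 (at_right 0)"
    using mtendsto_mrestrict[where L = 0] lim by (simp add: mrestrict_def zero_fun_def)
qed (use \<delta> in \<open>simp_all add: supported_mrestrict\<close>)

end

theorem lemma4p14:
  fixes ns :: "nat list" and Q :: bmat and V V' :: "real \<Rightarrow> bmat" and T :: real
  assumes young: "young_diagram ns"
    and Qsym: "symmetric_on (boxes ns) Q"
    and Tpos: "0 < T"
    and deriv: "\<And>t x y. t \<in> {0<..<T} \<Longrightarrow> x \<in> boxes ns \<Longrightarrow> y \<in> boxes ns \<Longrightarrow>
                 ((\<lambda>s. V s x y) has_real_derivative V' t x y) (at t)"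
    and ode: "\<And>t x y. t \<in> {0<..<T} \<Longrightarrow> x \<in> boxes ns \<Longrightarrow> y \<in> boxes ns \<Longrightarrow>
                 V' t x y = - mmul (boxes ns) Gamma1 (V t) x y
                            - mmul (boxes ns) (V t) (mtrans Gamma1) x y
                            - Q x y
                            - mmul (boxes ns) (mmul (boxes ns) (V t) Gamma2) (V t) x y"
    and inv: "\<forall>\<^sub>F t in at_right 0. invertible_on (boxes ns) (V t)"
    and lim: "\<And>x y. x \<in> boxes ns \<Longrightarrow> y \<in> boxes ns \<Longrightarrow>
                 ((\<lambda>t. minv (boxes ns) (V t) x y) \<longlongrightarrow> 0) (at_right 0)"
  shows "\<forall>t\<in>{0<..<T}. neg_semidef_on (boxes ns) (V' t)"
proof -
  \<comment> \<open>The shape of the diagram is irrelevant: only finiteness of the box set is used.\<close>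
  interpret finite_index "boxes ns" by unfold_locales (rule finite_boxes)
  obtain \<delta> where \<delta>: "0 < \<delta>" "\<delta> \<le> T" "\<And>t. t \<in> {0<..<\<delta>} \<Longrightarrow> invertible_on (boxes ns) (V t)"
    using inv Tpos unfolding eventually_at_right_field
    by (metis greaterThanLessThan_iff min.absorb_iff2 min.strict_boundedE nle_le)
  have inverse: "is_inverse (boxes ns) (V t) (minv (boxes ns) (V t))" if "t \<in> {0<..<\<delta>}" for t
    using \<delta>(3)[OF that] unfolding invertible_on_def minv_def by (rule someI_ex)
  interpret riccati "boxes ns" "mrestrict Gamma1" "mrestrict Gamma2" "mrestrict Q"
    "\<lambda>t. mrestrict (V t)" "\<lambda>t. mrestrict (V' t)" "\<lambda>t. mrestrict (minv (boxes ns) (V t))" T \<delta>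
    by (rule riccati_mrestrict[OF Qsym \<delta>(1,2) deriv ode inverse lim])
  show ?thesis
    using nonpos_W by (simp add: neg_semidef_on_def qform_def mrestrict_def)
qed

end
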